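(* Let $A\in\mathbb{R}^{n\times d}$ be fixed with all rows of Euclidean norm at most $2$, let $c,c'\in\mathbb{R}^d$ be fixed, and let $I\in\binom{[n]}{d}$ with $A_I$ invertible. If $Z\in\mathbb{R}^d$ has a $1$-log-Lipschitz probability density function, then for $m=\ln(1/0.99)/(2d)$, \[ \Pr\big[I\in M(A,c+Z,c'+Z,m)\big]\ge 0.99\Pr\big[I\in M(A,c+Z,c'+Z,0)\big]. \]
   Context: $M(A,y,y',m)$ is the set of bases $I\in\binom{[n]}{d}$ such that there exists $w\in[y,y']$ with $w^\top A_I^{-1}\ge m$ componentwise. A density $\mu$ is $1$-log-Lipschitz if $|\log\mu(x)-\log\mu(y)|\le\|x-y\|$ for all $x,y$. *)

theory Defs
  imports "HOL-Probability.Probability"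
begin

text \<open>A matrix A in R^(n x d) is represented as real^'d^'n (rows A $ i, i :: 'n).
  For a set I of row indices with card I = d, A_I is the d x d submatrix formed by
  the rows in I, listed via a fixed enumeration of I (the componentwise condition
  below does not depend on the enumeration).\<close>

definition sub_rows :: "real^'d^'n \<Rightarrow> 'n set \<Rightarrow> real^'d^'d" where
  "sub_rows A I = (\<chi> k. A $ ((SOME e. bij_betw e (UNIV::'d set) I) k))"

definition bases_M :: "real^'d^'n \<Rightarrow> real^'d \<Rightarrow> real^'d \<Rightarrow> real \<Rightarrow> 'n set set" where
  "bases_M A y y' m = {I. card I = CARD('d) \<and> invertible (sub_rows A I) \<and>
      (\<exists>w \<in> closed_segment y y'. \<forall>k. (w v* matrix_inv (sub_rows A I)) $ k \<ge> m)}"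

definition log_lipschitz1 :: "('a::metric_space \<Rightarrow> real) \<Rightarrow> bool" where
  "log_lipschitz1 \<mu> \<longleftrightarrow> (\<forall>x. \<mu> x > 0) \<and> (\<forall>x y. \<bar>ln (\<mu> x) - ln (\<mu> y)\<bar> \<le> dist x y)"

end

theory Submission imports Defs begin

text \<open>Shifting the segment by \<open>m \<cdot> 1\<^sup>T A\<^sub>I\<close> adds \<open>m\<close> to every coordinate of
  \<open>w\<^sup>T A\<^sub>I\<^sup>-\<^sup>1\<close>, so it turns a witness for the threshold 0 into one for the
  threshold \<open>m\<close>. With rows of norm at most 2 the shift has norm at most \<open>2 d m = ln (1/0.99)\<close>,
  and a 1-log-Lipschitz density loses at most the factor \<open>0.99\<close> under such a translation.
  Comparing the two probabilities as integrals of the density over the event sets, which are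
  closed and hence Borel, gives the claim.\<close>

lemma closed_Collect_vector_matrix_ge: "closed {w::real^'m. \<forall>k. r \<le> (w v* M) $ k}"
proof -
  have "{w::real^'m. \<forall>k. r \<le> (w v* M) $ k} = {w. \<forall>k. r \<le> (transpose M *v w) $ k}"
    by simp
  also have "closed \<dots>"
    by (intro closed_Collect_all closed_Collect_le continuous_intros)
  finally show ?thesis .
qed

lemma closed_translates_in_bases_M:
  fixes A :: "real^'d^'n::finite"
  shows "closed {z. I \<in> bases_M A (c + z) (c' + z) r}"
proof (cases "card I = CARD('d) \<and> invertible (sub_rows A I)")
  case False
  then have "{z. I \<in> bases_M A (c + z) (c' + z) r} = {}"
    by (auto simp: bases_M_def)
  then show ?thesis by simp
next
  case True
  let ?C = "{w::real^'d. \<forall>k. r \<le> (w v* matrix_inv (sub_rows A I)) $ k}"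
  have "{z. I \<in> bases_M A (c + z) (c' + z) r} = (\<Union>w\<in>?C. \<Union>x\<in>closed_segment c c'. {w - x})"
  proof (intro set_eqI iffI)
    fix z assume "z \<in> {z. I \<in> bases_M A (c + z) (c' + z) r}"
    then obtain w where w: "w \<in> closed_segment (z + c) (z + c')" "w \<in> ?C"
      using True by (auto simp: bases_M_def add.commute)
    then obtain x where "x \<in> closed_segment c c'" "w = z + x"
      unfolding closed_segment_translation by auto
    then show "z \<in> (\<Union>w\<in>?C. \<Union>x\<in>closed_segment c c'. {w - x})"
      using w by force
  next
    fix z assume "z \<in> (\<Union>w\<in>?C. \<Union>x\<in>closed_segment c c'. {w - x})"
    then obtain w x where wx: "w \<in> ?C" "x \<in> closed_segment c c'" "z = w - x"
      by auto
    then have "w \<in> closed_segment (z + c) (z + c')"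
      unfolding closed_segment_translation by auto
    then show "z \<in> {z. I \<in> bases_M A (c + z) (c' + z) r}"
      using True wx by (auto simp: bases_M_def add.commute)
  qed
  also have "closed \<dots>"
    by (intro closed_compact_differences closed_Collect_vector_matrix_ge compact_segment)
  finally show ?thesis .
qed

lemma matrix_inv_right:
  assumes "invertible (M :: 'a::semiring_1^'n^'m)"
  shows "M ** matrix_inv M = mat 1"
  using assms unfolding invertible_def matrix_inv_def by (rule someI_ex[THEN conjunct1])

lemma bases_M_translate:
  fixes A :: "real^'d^'n::finite" and I :: "'n set"
  defines "s \<equiv> (\<chi> i. 1) v* sub_rows A I"
  assumes "I \<in> bases_M A y y' r"
  shows "I \<in> bases_M A (y + t *\<^sub>R s) (y' + t *\<^sub>R s) (r + t)"
proof -
  let ?B = "sub_rows A I"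
  obtain w where w: "w \<in> closed_segment y y'" "\<forall>k. r \<le> (w v* matrix_inv ?B) $ k"
    and basis: "card I = CARD('d)" "invertible ?B"
    using assms(2) by (auto simp: bases_M_def)
  have "?B ** matrix_inv ?B = mat 1"
    using basis(2) by (rule matrix_inv_right)
  then have "s v* matrix_inv ?B = (\<chi> i. 1)"
    by (simp add: s_def vector_matrix_mul_assoc)
  then have "(w + t *\<^sub>R s) v* matrix_inv ?B = w v* matrix_inv ?B + t *\<^sub>R (\<chi> i. 1)"
    by (simp add: vector_matrix_left_distrib scaleR_vector_matrix_assoc)
  then have "\<forall>k. r + t \<le> ((w + t *\<^sub>R s) v* matrix_inv ?B) $ k"
    using w(2) by simp
  moreover have "w + t *\<^sub>R s \<in> closed_segment (y + t *\<^sub>R s) (y' + t *\<^sub>R s)"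
    using w(1) closed_segment_translation[of "t *\<^sub>R s" y y'] by (auto simp: add.commute)
  ultimately show ?thesis
    using basis unfolding bases_M_def by blast
qed

lemma norm_ones_vector_matrix_sub_rows_le:
  fixes A :: "real^'d^'n::finite"
  assumes "\<forall>i. norm (A $ i) \<le> b"
  shows "norm ((\<chi> i. 1) v* sub_rows A I) \<le> real CARD('d) * b"
proof -
  have "(\<chi> i. 1) v* sub_rows A I = (\<Sum>k\<in>UNIV. sub_rows A I $ k)"
    by (simp add: vector_matrix_mult_def vec_eq_iff sum_component)
  also have "norm \<dots> \<le> (\<Sum>k\<in>(UNIV::'d set). norm (sub_rows A I $ k))"
    by (rule norm_sum)
  also have "\<dots> \<le> (\<Sum>k\<in>(UNIV::'d set). b)"
    by (intro sum_mono) (simp add: sub_rows_def assms)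
  finally show ?thesis by simp
qed

lemma log_lipschitz1_translate_ge:
  assumes "log_lipschitz1 \<mu>" "0 < q" "norm a \<le> ln (1 / q)"
  shows "q * \<mu> x \<le> \<mu> (a + x)"
proof -
  have pos: "\<mu> x > 0" "\<mu> (a + x) > 0"
    and "\<bar>ln (\<mu> x) - ln (\<mu> (a + x))\<bar> \<le> dist x (a + x)"
    using assms(1) by (auto simp: log_lipschitz1_def)
  moreover have "dist x (a + x) = norm a"
    by (simp add: dist_norm)
  ultimately have "ln q + ln (\<mu> x) \<le> ln (\<mu> (a + x))"
    using assms(2,3) by (simp add: ln_div)
  then have "ln (q * \<mu> x) \<le> ln (\<mu> (a + x))"
    using pos assms(2) by (simp add: ln_mult)
  then show ?thesis
    using pos assms(2) by (subst (asm) ln_le_cancel_iff) auto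
qed

lemma distributed_translate_prob_le:
  fixes Z :: "'w \<Rightarrow> 'a::euclidean_space" and f :: "'a \<Rightarrow> real"
  assumes P: "prob_space P"
    and Z: "distributed P lborel Z (\<lambda>x. ennreal (f x))"
    and E: "E \<in> sets borel" and F: "F \<in> sets borel"
    and maps_to: "\<And>x. x \<in> E \<Longrightarrow> a + x \<in> F"
    and density_ge: "\<And>x. x \<in> E \<Longrightarrow> q * f x \<le> f (a + x)"
    and "0 \<le> q"
  shows "q * measure P {\<omega> \<in> space P. Z \<omega> \<in> E} \<le> measure P {\<omega> \<in> space P. Z \<omega> \<in> F}"
proof -
  interpret P: prob_space P by (rule P)
  have f_meas: "(\<lambda>x. ennreal (f x)) \<in> borel_measurable lborel"
    using Z by (rule distributed_borel_measurable)
  have prob_eq: "emeasure P {\<omega> \<in> space P. Z \<omega> \<in> S} = (\<integral>\<^sup>+ x. ennreal (f x) * indicator S x \<partial>lborel)"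
    if "S \<in> sets borel" for S
    using distributed_emeasure[OF Z, of S] that by (simp add: vimage_def Int_def conj_commute)
  have pointwise: "ennreal q * (ennreal (f x) * indicator E x) \<le> ennreal (f (a + x)) * indicator F (a + x)" for x
    using maps_to[of x] density_ge[of x] \<open>0 \<le> q\<close>
    by (auto simp: ennreal_mult'[symmetric] ennreal_leI split: split_indicator)
  have "ennreal q * emeasure P {\<omega> \<in> space P. Z \<omega> \<in> E}
      = (\<integral>\<^sup>+ x. ennreal q * (ennreal (f x) * indicator E x) \<partial>lborel)"
    using f_meas E by (simp add: prob_eq nn_integral_cmult)
  also have "\<dots> \<le> (\<integral>\<^sup>+ x. ennreal (f (a + x)) * indicator F (a + x) \<partial>lborel)"
    by (intro nn_integral_mono pointwise)
  also have "\<dots> = (\<integral>\<^sup>+ x. ennreal (f x) * indicator F x \<partial>distr lborel borel ((+) a))"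
    using f_meas F by (subst nn_integral_distr) auto
  also have "\<dots> = emeasure P {\<omega> \<in> space P. Z \<omega> \<in> F}"
    by (simp add: lborel_distr_plus prob_eq F)
  finally show ?thesis
    using \<open>0 \<le> q\<close> by (simp add: P.emeasure_eq_measure ennreal_mult'[symmetric])
qed

theorem corollary4p6:
  fixes A :: "real^'d^'n::finite"
    and c c' :: "real^'d"
    and I :: "'n set"
    and P :: "'w measure"
    and Z :: "'w \<Rightarrow> real^'d"
    and \<mu> :: "real^'d \<Rightarrow> real"
  assumes rows: "\<forall>i. norm (A $ i) \<le> 2"
    and card_I: "card I = CARD('d)"
    and inv_I: "invertible (sub_rows A I)"
    and P: "prob_space P"
    and Zdist: "distributed P lborel Z (\<lambda>x. ennreal (\<mu> x))"
    and loglip: "log_lipschitz1 \<mu>"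
  shows "measure P {\<omega> \<in> space P. I \<in> bases_M A (c + Z \<omega>) (c' + Z \<omega>) (ln (1 / 0.99) / (2 * real CARD('d)))}
         \<ge> 0.99 * measure P {\<omega> \<in> space P. I \<in> bases_M A (c + Z \<omega>) (c' + Z \<omega>) 0}"
proof -
  define m where "m = ln (1 / 0.99) / (2 * real CARD('d))"
  define a where "a = m *\<^sub>R ((\<chi> i. 1) v* sub_rows A I)"
  define E where "E r = {z. I \<in> bases_M A (c + z) (c' + z) r}" for r
  have "0 \<le> m"
    by (simp add: m_def)
  then have "norm a = m * norm ((\<chi> i. 1) v* sub_rows A I)"
    by (simp add: a_def)
  also have "\<dots> \<le> m * (real CARD('d) * 2)"
    using norm_ones_vector_matrix_sub_rows_le[OF rows] \<open>0 \<le> m\<close> by (rule mult_left_mono)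
  also have "\<dots> = ln (1 / 0.99)"
    by (simp add: m_def)
  finally have "0.99 * \<mu> x \<le> \<mu> (a + x)" for x
    by (intro log_lipschitz1_translate_ge[OF loglip]) simp_all
  moreover have "a + x \<in> E m" if "x \<in> E 0" for x
    using bases_M_translate[OF that[unfolded E_def mem_Collect_eq], of m]
    by (simp add: E_def a_def algebra_simps)
  ultimately have "0.99 * measure P {\<omega> \<in> space P. Z \<omega> \<in> E 0} \<le> measure P {\<omega> \<in> space P. Z \<omega> \<in> E m}"
    by (intro distributed_translate_prob_le[OF P Zdist])
      (auto simp: E_def borel_closed closed_translates_in_bases_M)
  then show ?thesis
    by (simp add: E_def m_def)
qed

end
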